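(* Let $S=\Sigma^*$ be the free monoid over an alphabet $\Sigma$. Then: (1) $[1,1]=\rho_1$; (2) $[1,[1,1]]=0$ (so $S$ is left $2$-nilpotent); (3) if $|\Sigma|\le2$, then $\rho_2=[[1,1],1]=[1,1,1]$ and $\rho_2$ is cancellative; if $|\Sigma|\ge3$, then $\rho_2$ is not cancellative; (4) $S$ is right nilpotent if and only if $|\Sigma|\le1$.
   Context: $q_1(x,y,z)=xy$, $q_{k+1}(x,y,z)=q_k(x,y,z)\,z_k\,q_k(y,x,z)$ for $z=(z_1,z_2,\dots)$; $\rho_n$ is the congruence of $S$ generated by all pairs $(q_n(x,y,z),q_n(y,x,z))$ with $x,y\in S$, $z\in S^{\mathbb N}$ (so $\rho_1$ is generated by $(xy,yx)$, $\rho_2$ by $(xyz_1yx,yxz_1xy)$). A congruence $\sigma$ is cancellative if $S/\sigma$ is cancellative. Commutators are those of the semigroup $(S,\cdot)$: for congruences $\alpha_1,\dots,\alpha_k$, $M(\alpha_1,\dots,\alpha_k)$ is the subsemigroup of $S^{\{0,1\}^k}$ generated by all $g$ such that for some $i$ and $(a,b)\in\alpha_i$, $g(x)=a$ if $x_i=0$ and $g(x)=b$ if $x_i=1$; $[\alpha_1,\dots,\alpha_k]$ is the smallest congruence $\delta$ such that for all $f\in M(\alpha_1,\dots,\alpha_k)$: if $(f(x0),f(x1))\in\delta$ for all $x\in\{0,1\}^{k-1}\setminus\{(1,\dots,1)\}$ then $(f(1,\dots,1,0),f(1,\dots,1,1))\in\delta$. $1$ is the total and $0$ the trivial congruence; $[1)^1=1$,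 $[1)^{j+1}=[[1)^j,1]$; $S$ is right nilpotent if $[1)^{d+1}=0$ for some $d\in\mathbb N$. *)

theory Defs
  imports Main
begin

definition is_cong :: "'a set \<Rightarrow> ('a \<Rightarrow> 'a \<Rightarrow> 'a) \<Rightarrow> 'a rel \<Rightarrow> bool" where
  "is_cong A mult r \<longleftrightarrow> equiv A r \<and>
     (\<forall>a b c d. (a, b) \<in> r \<longrightarrow> (c, d) \<in> r \<longrightarrow> (mult a c, mult b d) \<in> r)"

definition cong_gen :: "'a set \<Rightarrow> ('a \<Rightarrow> 'a \<Rightarrow> 'a) \<Rightarrow> 'a rel \<Rightarrow> 'a rel" where
  "cong_gen A mult R = \<Inter>{r. is_cong A mult r \<and> R \<subseteq> r}"

definition total_cong :: "'a set \<Rightarrow> 'a rel" where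
  "total_cong A = A \<times> A"

definition trivial_cong :: "'a set \<Rightarrow> 'a rel" where
  "trivial_cong A = Id_on A"

text \<open>qq mult k x y z is the paper's q_{k+1}(x,y,z); z i is the paper's z_i (i \<ge> 1).\<close>
fun qq :: "('a \<Rightarrow> 'a \<Rightarrow> 'a) \<Rightarrow> nat \<Rightarrow> 'a \<Rightarrow> 'a \<Rightarrow> (nat \<Rightarrow> 'a) \<Rightarrow> 'a" where
  "qq mult 0 x y z = mult x y"
| "qq mult (Suc k) x y z = mult (mult (qq mult k x y z) (z (Suc k))) (qq mult k y x z)"

text \<open>rho A mult n is the paper's rho_n (for n \<ge> 1).\<close>
definition rho :: "'a set \<Rightarrow> ('a \<Rightarrow> 'a \<Rightarrow> 'a) \<Rightarrow> nat \<Rightarrow> 'a rel" where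
  "rho A mult n = cong_gen A mult
     {(qq mult (n - 1) x y z, qq mult (n - 1) y x z) | x y z.
        x \<in> A \<and> y \<in> A \<and> (\<forall>i. z i \<in> A)}"

definition cancellative_cong :: "'a set \<Rightarrow> ('a \<Rightarrow> 'a \<Rightarrow> 'a) \<Rightarrow> 'a rel \<Rightarrow> bool" where
  "cancellative_cong A mult s \<longleftrightarrow>
     (\<forall>a\<in>A. \<forall>b\<in>A. \<forall>c\<in>A.
        ((mult a c, mult b c) \<in> s \<longrightarrow> (a, b) \<in> s) \<and>
        ((mult c a, mult c b) \<in> s \<longrightarrow> (a, b) \<in> s))"

text \<open>M(alpha_1,...,alpha_k): elements of S^{{0,1}^k} are represented as functions on
  bool lists (only values at lists of length k matter; False = 0, True = 1;
  coordinate i (1-based) is list index i-1).\<close>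
inductive_set Mset :: "('a \<Rightarrow> 'a \<Rightarrow> 'a) \<Rightarrow> 'a rel list \<Rightarrow> (bool list \<Rightarrow> 'a) set"
  for mult :: "'a \<Rightarrow> 'a \<Rightarrow> 'a" and als :: "'a rel list" where
  gen: "i < length als \<Longrightarrow> (a, b) \<in> als ! i \<Longrightarrow>
          (\<lambda>x. if x ! i then b else a) \<in> Mset mult als"
| prod: "g \<in> Mset mult als \<Longrightarrow> h \<in> Mset mult als \<Longrightarrow>
          (\<lambda>x. mult (g x) (h x)) \<in> Mset mult als"

definition term_cond :: "('a \<Rightarrow> 'a \<Rightarrow> 'a) \<Rightarrow> 'a rel list \<Rightarrow> 'a rel \<Rightarrow> bool" where
  "term_cond mult als d \<longleftrightarrow>
     (\<forall>g \<in> Mset mult als.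
        (\<forall>x. length x = length als - 1 \<and> x \<noteq> replicate (length als - 1) True \<longrightarrow>
              (g (x @ [False]), g (x @ [True])) \<in> d) \<longrightarrow>
        (g (replicate (length als - 1) True @ [False]),
         g (replicate (length als - 1) True @ [True])) \<in> d)"

definition commutator :: "'a set \<Rightarrow> ('a \<Rightarrow> 'a \<Rightarrow> 'a) \<Rightarrow> 'a rel list \<Rightarrow> 'a rel" where
  "commutator A mult als = \<Inter>{d. is_cong A mult d \<and> term_cond mult als d}"

text \<open>rpow A mult j is the paper's [1)^{j+1}.\<close>
fun rpow :: "'a set \<Rightarrow> ('a \<Rightarrow> 'a \<Rightarrow> 'a) \<Rightarrow> nat \<Rightarrow> 'a rel" where
  "rpow A mult 0 = total_cong A"
| "rpow A mult (Suc j) = commutator A mult [rpow A mult j, total_cong A]"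

definition right_nilpotent :: "'a set \<Rightarrow> ('a \<Rightarrow> 'a \<Rightarrow> 'a) \<Rightarrow> bool" where
  "right_nilpotent A mult \<longleftrightarrow> (\<exists>d::nat. d \<ge> 1 \<and> rpow A mult d = trivial_cong A)"

end

theory Submission
  imports Defs "HOL-Library.Multiset"
begin

text \<open>
  The congruence rho_1 of the free monoid is the kernel of w \<mapsto> mset w. The binary term condition
  for [1, 1] amounts to additivity of mset, so [1, 1] = rho_1; and rho_1-related words have equal
  length, which lets the second coordinate be cancelled, so [1, rho_1] = 0.

  Fix a letter a and count the occurrences of a, the other letters, and the inversions (an a before
  another letter). The first two are additive and the inversion count is additive up to the bilinear
  term occs(u) non_occs(v); this is exactly what the term conditions for [rho_1, 1] and [1, 1, 1]
  tolerate, so both commutators lie in the kernel of these three invariants, which is cancellative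
  and contains rho_2. Over two letters words with equal invariants are connected by the moves
  xyzyx to yxzxy, so all four congruences coincide. Over three letters a Rees congruence shows
  that rho_2 is not cancellative. Finally, for letters a \<noteq> b, every [1)^d contains a pair u \<noteq> v of
  equal length, and then (uv, vu) is a nontrivial pair of [1)^(d+1).
\<close>

section \<open>Congruences and commutators of a semigroup\<close>

lemma is_cong_refl: "is_cong A mul r \<Longrightarrow> x \<in> A \<Longrightarrow> (x, x) \<in> r"
  by (simp add: is_cong_def equiv_def refl_on_def)

lemma is_cong_sym: "is_cong A mul r \<Longrightarrow> (x, y) \<in> r \<Longrightarrow> (y, x) \<in> r"
  by (auto simp: is_cong_def equiv_def sym_def)

lemma is_cong_trans: "is_cong A mul r \<Longrightarrow> (x, y) \<in> r \<Longrightarrow> (y, z) \<in> r \<Longrightarrow> (x, z) \<in> r"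
  unfolding is_cong_def equiv_def trans_def by blast

lemma is_cong_mult: "is_cong A mul r \<Longrightarrow> (x, y) \<in> r \<Longrightarrow> (u, v) \<in> r \<Longrightarrow> (mul x u, mul y v) \<in> r"
  by (simp add: is_cong_def)

lemma is_cong_total: "\<forall>a\<in>A. \<forall>b\<in>A. mul a b \<in> A \<Longrightarrow> is_cong A mul (A \<times> A)"
  by (auto simp: is_cong_def equiv_def refl_on_def sym_def trans_def)

lemma is_cong_Id_on: "\<forall>a\<in>A. \<forall>b\<in>A. mul a b \<in> A \<Longrightarrow> is_cong A mul (Id_on A)"
  by (auto simp: is_cong_def equiv_def refl_on_def sym_def trans_def)

lemma cong_gen_least: "is_cong A mul r \<Longrightarrow> R \<subseteq> r \<Longrightarrow> cong_gen A mul R \<subseteq> r"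
  unfolding cong_gen_def by blast

lemma cong_gen_superset: "R \<subseteq> cong_gen A mul R"
  unfolding cong_gen_def by blast

lemma is_cong_cong_gen:
  assumes closed: "\<forall>a\<in>A. \<forall>b\<in>A. mul a b \<in> A" and R: "R \<subseteq> A \<times> A"
  shows "is_cong A mul (cong_gen A mul R)"
  unfolding is_cong_def equiv_def refl_on_def sym_def trans_def
proof (intro conjI allI impI ballI)
  show "cong_gen A mul R \<subseteq> A \<times> A"
    by (rule cong_gen_least[OF is_cong_total[OF closed] R])
  fix x assume "x \<in> A"
  then show "(x, x) \<in> cong_gen A mul R"
    unfolding cong_gen_def by (auto intro: is_cong_refl)
next
  fix x y assume "(x, y) \<in> cong_gen A mul R"
  then show "(y, x) \<in> cong_gen A mul R"
    unfolding cong_gen_def by (auto intro: is_cong_sym)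
next
  fix x y z assume "(x, y) \<in> cong_gen A mul R" "(y, z) \<in> cong_gen A mul R"
  then show "(x, z) \<in> cong_gen A mul R"
    unfolding cong_gen_def by (auto intro: is_cong_trans)
next
  fix a b c d assume "(a, b) \<in> cong_gen A mul R" "(c, d) \<in> cong_gen A mul R"
  then show "(mul a c, mul b d) \<in> cong_gen A mul R"
    unfolding cong_gen_def by (auto intro: is_cong_mult)
qed

lemma commutator_least: "is_cong A mul d \<Longrightarrow> term_cond mul als d \<Longrightarrow> commutator A mul als \<subseteq> d"
  unfolding commutator_def by blast

lemma subset_commutatorI:
  "(\<And>d. is_cong A mul d \<Longrightarrow> term_cond mul als d \<Longrightarrow> r \<subseteq> d) \<Longrightarrow> r \<subseteq> commutator A mul als"
  unfolding commutator_def by blast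

lemma Mset_in_carrier:
  assumes "f \<in> Mset mul als" and "\<forall>a\<in>A. \<forall>b\<in>A. mul a b \<in> A" and "\<forall>r\<in>set als. r \<subseteq> A \<times> A"
  shows "f x \<in> A"
  using assms by induction (auto dest!: nth_mem)

lemma all_bool_list_length_1_iff:
  "(\<forall>x. length x = 1 \<and> x \<noteq> [True] \<longrightarrow> P x) \<longleftrightarrow> P [False]"
  by (auto simp: length_Suc_conv) (metis (full_types))

lemma all_bool_list_length_2_iff:
  "(\<forall>x. length x = 2 \<and> x \<noteq> [True, True] \<longrightarrow> P x) \<longleftrightarrow> P [False, False] \<and> P [False, True] \<and> P [True, False]"
  by (auto simp: length_Suc_conv numeral_2_eq_2) (metis (full_types))+

lemma term_cond_pair_iff: "term_cond mul [\<alpha>, \<beta>] d \<longleftrightarrow>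
  (\<forall>g\<in>Mset mul [\<alpha>, \<beta>]. (g [False, False], g [False, True]) \<in> d \<longrightarrow> (g [True, False], g [True, True]) \<in> d)"
  unfolding term_cond_def
  using all_bool_list_length_1_iff[where P = "\<lambda>x. (g (x @ [False]), g (x @ [True])) \<in> d" for g]
  by simp

lemma term_cond_triple_iff: "term_cond mul [\<alpha>, \<beta>, \<gamma>] d \<longleftrightarrow>
  (\<forall>g\<in>Mset mul [\<alpha>, \<beta>, \<gamma>]. (g [False, False, False], g [False, False, True]) \<in> d
     \<and> (g [False, True, False], g [False, True, True]) \<in> d
     \<and> (g [True, False, False], g [True, False, True]) \<in> d
     \<longrightarrow> (g [True, True, False], g [True, True, True]) \<in> d)"
  unfolding term_cond_def
  using all_bool_list_length_2_iff[where P = "\<lambda>x. (g (x @ [False]), g (x @ [True])) \<in> d" for g]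
  by (simp add: numeral_2_eq_2)

lemma term_cond_pairD:
  "term_cond mul [\<alpha>, \<beta>] d \<Longrightarrow> g \<in> Mset mul [\<alpha>, \<beta>] \<Longrightarrow>
   (g [False, False], g [False, True]) \<in> d \<Longrightarrow> (g [True, False], g [True, True]) \<in> d"
  unfolding term_cond_pair_iff by blast

lemma term_cond_tripleD:
  "term_cond mul [\<alpha>, \<beta>, \<gamma>] d \<Longrightarrow> g \<in> Mset mul [\<alpha>, \<beta>, \<gamma>] \<Longrightarrow>
   (g [False, False, False], g [False, False, True]) \<in> d \<Longrightarrow>
   (g [False, True, False], g [False, True, True]) \<in> d \<Longrightarrow>
   (g [True, False, False], g [True, False, True]) \<in> d \<Longrightarrow>
   (g [True, True, False], g [True, True, True]) \<in> d"
  unfolding term_cond_triple_iff by blast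

lemma qq_in_carrier:
  "\<forall>a\<in>A. \<forall>b\<in>A. mul a b \<in> A \<Longrightarrow> x \<in> A \<Longrightarrow> y \<in> A \<Longrightarrow> \<forall>i. z i \<in> A \<Longrightarrow> qq mul k x y z \<in> A"
  by (induction k arbitrary: x y) auto

lemma is_cong_rho: "\<forall>a\<in>A. \<forall>b\<in>A. mul a b \<in> A \<Longrightarrow> is_cong A mul (rho A mul n)"
  unfolding rho_def by (rule is_cong_cong_gen) (auto intro: qq_in_carrier)

lemma rho_generator:
  "x \<in> A \<Longrightarrow> y \<in> A \<Longrightarrow> \<forall>i. z i \<in> A \<Longrightarrow>
   (qq mul (n - 1) x y z, qq mul (n - 1) y x z) \<in> rho A mul n"
  unfolding rho_def by (rule subsetD[OF cong_gen_superset]) blast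

lemma rho_least:
  assumes "is_cong A mul d"
    and "\<And>x y z. x \<in> A \<Longrightarrow> y \<in> A \<Longrightarrow> \<forall>i. z i \<in> A \<Longrightarrow>
           (qq mul (n - 1) x y z, qq mul (n - 1) y x z) \<in> d"
  shows "rho A mul n \<subseteq> d"
  unfolding rho_def using assms by (intro cong_gen_least) blast+

lemma append_closed_lists: "\<forall>a\<in>lists S. \<forall>b\<in>lists S. a @ b \<in> lists S"
  by simp

lemma is_cong_rho_lists: "is_cong (lists S) (@) (rho (lists S) (@) n)"
  by (rule is_cong_rho[OF append_closed_lists])

lemma is_cong_append_context:
  assumes "is_cong (lists S) (@) r" "(x, y) \<in> r" "p \<in> lists S" "s \<in> lists S"
  shows "(p @ x @ s, p @ y @ s) \<in> r"
  using assms by (blast intro: is_cong_mult is_cong_refl)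

lemma rho1_lists_generator: "x \<in> lists S \<Longrightarrow> y \<in> lists S \<Longrightarrow> (x @ y, y @ x) \<in> rho (lists S) (@) 1"
  using rho_generator[of x "lists S" y "\<lambda>_. []" "(@)" 1] by simp

lemma rho1_lists_least:
  "is_cong (lists S) (@) d \<Longrightarrow> (\<And>x y. x \<in> lists S \<Longrightarrow> y \<in> lists S \<Longrightarrow> (x @ y, y @ x) \<in> d) \<Longrightarrow>
   rho (lists S) (@) 1 \<subseteq> d"
  by (rule rho_least) simp_all

lemma rho2_lists_generator:
  "x \<in> lists S \<Longrightarrow> y \<in> lists S \<Longrightarrow> z \<in> lists S \<Longrightarrow>
   (x @ y @ z @ y @ x, y @ x @ z @ x @ y) \<in> rho (lists S) (@) 2"
  using rho_generator[of x "lists S" y "\<lambda>_. z" "(@)" 2] by (simp add: numeral_2_eq_2)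

lemma rho2_lists_least:
  "is_cong (lists S) (@) d \<Longrightarrow>
   (\<And>x y z. x \<in> lists S \<Longrightarrow> y \<in> lists S \<Longrightarrow> z \<in> lists S \<Longrightarrow> (x @ y @ z @ y @ x, y @ x @ z @ x @ y) \<in> d) \<Longrightarrow>
   rho (lists S) (@) 2 \<subseteq> d"
  by (rule rho_least) (simp_all add: numeral_2_eq_2)

lemma rho2_lists_step:
  "x \<in> lists S \<Longrightarrow> y \<in> lists S \<Longrightarrow> z \<in> lists S \<Longrightarrow> p \<in> lists S \<Longrightarrow> s \<in> lists S \<Longrightarrow>
   (p @ (x @ y @ z @ y @ x) @ s, p @ (y @ x @ z @ x @ y) @ s) \<in> rho (lists S) (@) 2"
  by (rule is_cong_append_context[OF is_cong_rho_lists rho2_lists_generator])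

section \<open>The congruences rho_1 and [1, 1]\<close>

definition mset_cong :: "'a set \<Rightarrow> 'a list rel" where
  "mset_cong S = {(u, v). u \<in> lists S \<and> v \<in> lists S \<and> mset u = mset v}"

lemma is_cong_mset_cong: "is_cong (lists S) (@) (mset_cong S)"
  by (auto simp: is_cong_def equiv_def refl_on_def sym_def trans_def mset_cong_def)

lemma mset_cong_in_rho1:
  "mset u = mset v \<Longrightarrow> u \<in> lists S \<Longrightarrow> v \<in> lists S \<Longrightarrow> (u, v) \<in> rho (lists S) (@) 1"
proof (induction u arbitrary: v)
  case Nil
  then show ?case by (auto intro: is_cong_refl[OF is_cong_rho_lists])
next
  case (Cons c u)
  have "c \<in> set v" using Cons.prems(1) by (metis list.set_intros(1) set_mset_mset)
  then obtain v1 v2 where v: "v = v1 @ c # v2" by (meson split_list)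
  have c: "c \<in> S" "v1 \<in> lists S" "v2 \<in> lists S" using Cons.prems v by auto
  have "(u, v1 @ v2) \<in> rho (lists S) (@) 1" using Cons v by auto
  then have "([c] @ u @ [], [c] @ (v1 @ v2) @ []) \<in> rho (lists S) (@) 1"
    by (rule is_cong_append_context[OF is_cong_rho_lists]) (use c in auto)
  moreover have "([] @ ([c] @ v1) @ v2, [] @ (v1 @ [c]) @ v2) \<in> rho (lists S) (@) 1"
    by (intro is_cong_append_context[OF is_cong_rho_lists] rho1_lists_generator) (use c in auto)
  ultimately show ?case using is_cong_trans[OF is_cong_rho_lists] v by fastforce
qed

lemma rho1_eq_mset_cong: "rho (lists S) (@) 1 = mset_cong S"
proof
  show "rho (lists S) (@) 1 \<subseteq> mset_cong S"
    by (rule rho1_lists_least[OF is_cong_mset_cong]) (auto simp: mset_cong_def)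
  show "mset_cong S \<subseteq> rho (lists S) (@) 1"
    unfolding mset_cong_def using mset_cong_in_rho1 by blast
qed

lemma Mset_mset_square:
  "f \<in> Mset (@) [\<alpha>, \<beta>] \<Longrightarrow>
   mset (f [True, True]) + mset (f [False, False]) = mset (f [True, False]) + mset (f [False, True])"
proof (induction rule: Mset.induct)
  case (gen i a b)
  then show ?case by (auto simp: less_Suc_eq)
next
  case (prod g h)
  then show ?case by (simp add: add_ac)
qed

lemma term_cond_mset_cong:
  "term_cond (@) [total_cong (lists S), total_cong (lists S)] (mset_cong S)"
  unfolding term_cond_pair_iff
proof (intro ballI impI)
  fix g assume g: "g \<in> Mset (@) [total_cong (lists S), total_cong (lists S)]"
    and "(g [False, False], g [False, True]) \<in> mset_cong S"
  then have "mset (g [False, False]) = mset (g [False, True])" by (simp add: mset_cong_def)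
  with Mset_mset_square[OF g] have "mset (g [True, False]) = mset (g [True, True])" by simp
  moreover have "g x \<in> lists S" for x
    by (rule Mset_in_carrier[OF g append_closed_lists]) (simp add: total_cong_def)
  ultimately show "(g [True, False], g [True, True]) \<in> mset_cong S" by (simp add: mset_cong_def)
qed

lemma rho1_subset_commutator_total:
  "rho (lists S) (@) 1 \<subseteq> commutator (lists S) (@) [total_cong (lists S), total_cong (lists S)]"
proof (rule subset_commutatorI)
  fix d assume d: "is_cong (lists S) (@) d"
    and tc: "term_cond (@) [total_cong (lists S), total_cong (lists S)] d"
  show "rho (lists S) (@) 1 \<subseteq> d"
  proof (rule rho1_lists_least[OF d])
    fix x y assume xy: "x \<in> lists S" "y \<in> lists S"
    let ?g = "\<lambda>w. (if w ! 1 then y else []) @ (if w ! 0 then x else []) @ (if w ! 1 then [] else y)"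
    have "?g \<in> Mset (@) [total_cong (lists S), total_cong (lists S)]"
      by (intro Mset.prod Mset.gen) (use xy in \<open>auto simp: total_cong_def\<close>)
    moreover have "(?g [False, False], ?g [False, True]) \<in> d"
      using is_cong_refl[OF d] xy by simp
    ultimately have "(?g [True, False], ?g [True, True]) \<in> d" by (rule term_cond_pairD[OF tc])
    then show "(x @ y, y @ x) \<in> d" by simp
  qed
qed

lemma commutator_total_total:
  "commutator (lists S) (@) [total_cong (lists S), total_cong (lists S)] = mset_cong S"
  using commutator_least[OF is_cong_mset_cong term_cond_mset_cong] rho1_subset_commutator_total
  unfolding rho1_eq_mset_cong by (rule equalityI)

section \<open>Left 2-nilpotence\<close>

lemma Mset_length_preserving_cancel:
  assumes "f \<in> Mset (@) [\<alpha>, \<beta>]" and "\<forall>(u, v)\<in>\<beta>. length u = length v"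
    and "f [False, False] = f [False, True]"
  shows "f [True, False] = f [True, True]"
proof -
  have "(\<forall>p. length (f [p, False]) = length (f [p, True])) \<and>
        (f [False, False] = f [False, True] \<longrightarrow> f [True, False] = f [True, True])"
    using assms(1)
  proof induction
    case (gen i a b)
    then show ?case using assms(2) by (auto simp: less_Suc_eq)
  next
    case (prod g h)
    then show ?case by (auto simp: append_eq_append_conv)
  qed
  with assms(3) show ?thesis by blast
qed

lemma commutator_total_mset_cong:
  "commutator (lists S) (@) [total_cong (lists S), mset_cong S] = Id_on (lists S)"
proof
  have "term_cond (@) [total_cong (lists S), mset_cong S] (Id_on (lists S))"
    unfolding term_cond_pair_iff
  proof (intro ballI impI)
    fix g assume g: "g \<in> Mset (@) [total_cong (lists S), mset_cong S]"
      and "(g [False, False], g [False, True]) \<in> Id_on (lists S)"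
    then have "g [True, False] = g [True, True]"
      by (intro Mset_length_preserving_cancel[OF g]) (auto simp: mset_cong_def dest: mset_eq_length)
    moreover have "g x \<in> lists S" for x
      by (rule Mset_in_carrier[OF g append_closed_lists]) (auto simp: total_cong_def mset_cong_def)
    ultimately show "(g [True, False], g [True, True]) \<in> Id_on (lists S)" by (metis Id_onI)
  qed
  then show "commutator (lists S) (@) [total_cong (lists S), mset_cong S] \<subseteq> Id_on (lists S)"
    by (rule commutator_least[OF is_cong_Id_on[OF append_closed_lists]])
  show "Id_on (lists S) \<subseteq> commutator (lists S) (@) [total_cong (lists S), mset_cong S]"
    by (rule subset_commutatorI) (auto intro: is_cong_refl)
qed

section \<open>Right nilpotence\<close>

lemma rpow_nontrivial:
  assumes "a \<in> S" "b \<in> S" "a \<noteq> b"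
  shows "\<exists>u v. (u, v) \<in> rpow (lists S) (@) d \<and> u \<noteq> v \<and> length u = length v \<and> u \<in> lists S \<and> v \<in> lists S"
proof (induction d)
  case 0
  show ?case by (rule exI[of _ "[a]"], rule exI[of _ "[b]"]) (use assms in \<open>auto simp: total_cong_def\<close>)
next
  case (Suc d)
  then obtain u v where uv: "(u, v) \<in> rpow (lists S) (@) d" "u \<noteq> v" "length u = length v"
    "u \<in> lists S" "v \<in> lists S" by blast
  have "{(u @ v, v @ u)} \<subseteq> commutator (lists S) (@) [rpow (lists S) (@) d, total_cong (lists S)]"
  proof (rule subset_commutatorI)
    fix r assume r: "is_cong (lists S) (@) r"
      and tc: "term_cond (@) [rpow (lists S) (@) d, total_cong (lists S)] r"
    let ?g = "\<lambda>w. (if w ! 1 then [] else u) @ (if w ! 0 then v else u) @ (if w ! 1 then u else [])"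
    have "?g \<in> Mset (@) [rpow (lists S) (@) d, total_cong (lists S)]"
      by (intro Mset.prod Mset.gen) (use uv in \<open>auto simp: total_cong_def\<close>)
    moreover have "(?g [False, False], ?g [False, True]) \<in> r"
      using is_cong_refl[OF r] uv by simp
    ultimately have "(?g [True, False], ?g [True, True]) \<in> r" by (rule term_cond_pairD[OF tc])
    then show "{(u @ v, v @ u)} \<subseteq> r" by simp
  qed
  moreover have "u @ v \<noteq> v @ u" using uv by (simp add: append_eq_append_conv)
  ultimately show ?case using uv by (intro exI[of _ "u @ v"] exI[of _ "v @ u"]) simp
qed

lemma mset_cong_singleton_alphabet: "S \<subseteq> {a} \<Longrightarrow> mset_cong S = Id_on (lists S)"
proof -
  assume S: "S \<subseteq> {a}"
  have "u = v" if "u \<in> lists S" "v \<in> lists S" "mset u = mset v" for u v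
  proof -
    have "u = replicate (length u) a" "v = replicate (length v) a"
      using that S by (auto intro!: replicate_length_same[symmetric])
    with that(3) show ?thesis by (metis mset_eq_length)
  qed
  then show ?thesis by (auto simp: mset_cong_def)
qed

lemma right_nilpotent_lists_iff: "right_nilpotent (lists S) (@) \<longleftrightarrow> (\<exists>a. S \<subseteq> {a})"
proof
  assume "right_nilpotent (lists S) (@)"
  then obtain d where d: "rpow (lists S) (@) d = Id_on (lists S)"
    unfolding right_nilpotent_def trivial_cong_def by blast
  have "a = b" if "a \<in> S" "b \<in> S" for a b
    using rpow_nontrivial[OF that, of d] d by (auto simp: Id_on_def)
  then show "\<exists>a. S \<subseteq> {a}" by blast
next
  assume "\<exists>a. S \<subseteq> {a}"
  then obtain a where "S \<subseteq> {a}" by blast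
  have "rpow (lists S) (@) 1 = commutator (lists S) (@) [total_cong (lists S), total_cong (lists S)]"
    by simp
  also have "\<dots> = Id_on (lists S)"
    unfolding commutator_total_total by (rule mset_cong_singleton_alphabet[OF \<open>S \<subseteq> {a}\<close>])
  finally show "right_nilpotent (lists S) (@)"
    unfolding right_nilpotent_def trivial_cong_def by blast
qed

section \<open>The congruence rho_2\<close>

definition occs :: "'a \<Rightarrow> 'a list \<Rightarrow> nat" where
  "occs a w = length (filter (\<lambda>c. c = a) w)"

definition non_occs :: "'a \<Rightarrow> 'a list \<Rightarrow> nat" where
  "non_occs a w = length (filter (\<lambda>c. c \<noteq> a) w)"

fun inversions :: "'a \<Rightarrow> 'a list \<Rightarrow> nat" where
  "inversions a [] = 0"
| "inversions a (c # w) = (if c = a then non_occs a w else 0) + inversions a w"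

lemma occs_simps [simp]:
  "occs a [] = 0" "occs a (c # w) = (if c = a then Suc (occs a w) else occs a w)"
  "occs a (u @ v) = occs a u + occs a v" "occs a (replicate k c) = (if c = a then k else 0)"
  by (auto simp: occs_def)

lemma non_occs_simps [simp]:
  "non_occs a [] = 0" "non_occs a (c # w) = (if c = a then non_occs a w else Suc (non_occs a w))"
  "non_occs a (u @ v) = non_occs a u + non_occs a v" "non_occs a (replicate k c) = (if c = a then 0 else k)"
  by (auto simp: non_occs_def)

lemma inversions_append [simp]: "inversions a (u @ v) = inversions a u + inversions a v + occs a u * non_occs a v"
  by (induction u) (auto simp: algebra_simps)

lemma inversions_replicate [simp]: "inversions a (replicate k c) = 0"
  by (induction k) auto

lemma occs_add_non_occs: "occs a w + non_occs a w = length w"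
  unfolding occs_def non_occs_def by (rule sum_length_filter_compl)

lemma inversions_le: "inversions a w \<le> occs a w * non_occs a w"
  by (induction w) auto

lemma mset_eq_occs: "mset u = mset v \<Longrightarrow> occs a u = occs a v \<and> non_occs a u = non_occs a v"
  unfolding occs_def non_occs_def by (metis mset_filter size_mset)

definition inversion_cong :: "'a set \<Rightarrow> 'a \<Rightarrow> 'a list rel" where
  "inversion_cong S a = {(u, v). u \<in> lists S \<and> v \<in> lists S \<and>
     occs a u = occs a v \<and> non_occs a u = non_occs a v \<and> inversions a u = inversions a v}"

lemma is_cong_inversion_cong: "is_cong (lists S) (@) (inversion_cong S a)"
  by (auto simp: is_cong_def equiv_def refl_on_def sym_def trans_def inversion_cong_def)

lemma inversion_cong_length: "(u, v) \<in> inversion_cong S a \<Longrightarrow> length u = length v"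
  unfolding inversion_cong_def by (metis (mono_tags, lifting) case_prodD mem_Collect_eq occs_add_non_occs)

lemma inversion_cong_Cons: "(c # u, c # v) \<in> inversion_cong S a \<Longrightarrow> (u, v) \<in> inversion_cong S a"
  unfolding inversion_cong_def by (auto split: if_splits)

lemma cancellative_inversion_cong: "cancellative_cong (lists S) (@) (inversion_cong S a)"
  unfolding cancellative_cong_def inversion_cong_def by auto

lemma rho2_subset_inversion_cong: "rho (lists S) (@) 2 \<subseteq> inversion_cong S a"
  by (rule rho2_lists_least[OF is_cong_inversion_cong]) (auto simp: inversion_cong_def algebra_simps)

lemma sorted_if_no_factor_ba:
  "y \<in> lists {a, b} \<Longrightarrow> \<nexists>y1 y2. y = y1 @ b # a # y2 \<Longrightarrow> \<exists>k m. y = replicate k a @ replicate m b"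
proof (induction y)
  case Nil
  then show ?case by (metis append_Nil replicate_0)
next
  case (Cons c y)
  have "\<nexists>y1 y2. y = y1 @ b # a # y2"
    using Cons.prems(2) by (metis append_Cons)
  with Cons obtain k m where y: "y = replicate k a @ replicate m b" by auto
  show ?case
  proof (cases "c = a")
    case True
    then show ?thesis using y by (metis append_Cons replicate_Suc)
  next
    case False
    then have "c = b" using Cons.prems(1) by simp
    moreover have "k = 0"
      using Cons.prems(2) y \<open>c = b\<close> by (cases k) (auto intro: exI[of _ "[]"])
    ultimately show ?thesis using y by (metis append_Nil replicate_0 replicate_Suc)
  qed
qed

lemma split_first_other_letter:
  "u \<in> lists {a, b} \<Longrightarrow> b \<in> set u \<Longrightarrow> \<exists>k y. u = replicate k a @ b # y"
proof (induction u)
  case (Cons c u)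
  show ?case
  proof (cases "c = b")
    case True
    then show ?thesis by (intro exI[of _ 0]) auto
  next
    case False
    with Cons obtain k y where "u = replicate k a @ b # y" by auto
    then show ?thesis using False Cons.prems(1) by (intro exI[of _ "Suc k"]) auto
  qed
qed simp

text \<open>While the leading block of a's is nonempty, the inversion bound forces a factor ba after the
  first b, and the rho_2-move abxba to baxab shortens the block.\<close>

lemma rho2_move_other_letter_to_front:
  assumes ab: "a \<noteq> b" and S: "S \<subseteq> {a, b}"
  shows "replicate k a @ b # y \<in> lists S \<Longrightarrow>
    inversions a (replicate k a @ b # y)
      \<le> (non_occs a (replicate k a @ b # y) - 1) * occs a (replicate k a @ b # y) \<Longrightarrow>
    \<exists>w \<in> lists S. (replicate k a @ b # y, b # w) \<in> rho (lists S) (@) 2"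
proof (induction k arbitrary: y)
  case 0
  then have "b # y \<in> lists S" by simp
  then show ?case using is_cong_refl[OF is_cong_rho_lists, of "b # y" S 2] by auto
next
  case (Suc k)
  let ?u = "replicate (Suc k) a @ b # y"
  have yS: "y \<in> lists S" using Suc.prems(1) by simp
  have "\<exists>y1 y2. y = y1 @ b # a # y2"
  proof (rule ccontr)
    assume "\<nexists>y1 y2. y = y1 @ b # a # y2"
    moreover have "y \<in> lists {a, b}" using yS S by auto
    ultimately obtain i j where y: "y = replicate i a @ replicate j b"
      using sorted_if_no_factor_ba[of y a b] by blast
    have "inversions a ?u = i * j + Suc k * Suc j" "(non_occs a ?u - 1) * occs a ?u = j * (Suc k + i)"
      using ab unfolding y by (simp_all del: replicate_Suc)
    with Suc.prems(2) have "i * j + Suc k * Suc j \<le> j * (Suc k + i)" by (simp only:)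
    then show False by (simp add: algebra_simps)
  qed
  then obtain y1 y2 where y: "y = y1 @ b # a # y2" by blast
  let ?y' = "a # y1 @ a # b # y2"
  have "(replicate k a @ ([a] @ [b] @ y1 @ [b] @ [a]) @ y2, replicate k a @ ([b] @ [a] @ y1 @ [a] @ [b]) @ y2)
       \<in> rho (lists S) (@) 2"
    by (rule rho2_lists_step) (use Suc.prems(1) y in auto)
  then have step: "(?u, replicate k a @ b # ?y') \<in> rho (lists S) (@) 2"
    using y by (simp add: replicate_app_Cons_same)
  then have inv: "(?u, replicate k a @ b # ?y') \<in> inversion_cong S a"
    by (rule subsetD[OF rho2_subset_inversion_cong])
  then have "replicate k a @ b # ?y' \<in> lists S" by (simp add: inversion_cong_def)
  moreover have "inversions a (replicate k a @ b # ?y')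
      \<le> (non_occs a (replicate k a @ b # ?y') - 1) * occs a (replicate k a @ b # ?y')"
    using inv Suc.prems(2) unfolding inversion_cong_def by (simp only: mem_Collect_eq case_prod_conv)
  ultimately obtain w where "w \<in> lists S" "(replicate k a @ b # ?y', b # w) \<in> rho (lists S) (@) 2"
    using Suc.IH by blast
  then show ?case using is_cong_trans[OF is_cong_rho_lists step] by blast
qed

lemma rho2_of_distinct_heads:
  assumes ab: "a \<noteq> b" and S: "S \<subseteq> {a, b}" and uv: "(a # u, b # v) \<in> inversion_cong S a"
    and IH: "\<And>w. length w = length v \<Longrightarrow> (w, v) \<in> inversion_cong S a \<Longrightarrow> (w, v) \<in> rho (lists S) (@) 2"
  shows "(a # u, b # v) \<in> rho (lists S) (@) 2"
proof -
  have uS: "a # u \<in> lists S" and bS: "b \<in> S" using uv by (auto simp: inversion_cong_def)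
  have uab: "a # u \<in> lists {a, b}" using uS S by auto
  have "non_occs a (a # u) \<noteq> 0" using uv ab by (simp add: inversion_cong_def)
  then have "\<exists>c\<in>set (a # u). c \<noteq> a" unfolding non_occs_def by (auto simp: filter_empty_conv)
  then have "b \<in> set (a # u)" using uab by auto
  then obtain k y where u: "a # u = replicate k a @ b # y"
    using split_first_other_letter[OF uab] by blast
  have "inversions a (a # u) \<le> (non_occs a (a # u) - 1) * occs a (a # u)"
    using uv ab inversions_le[of a v] by (simp add: inversion_cong_def mult.commute)
  then obtain w where wS: "w \<in> lists S" and uw: "(a # u, b # w) \<in> rho (lists S) (@) 2"
    using rho2_move_other_letter_to_front[OF ab S, of k y] uS unfolding u by blast
  have "(a # u, b # w) \<in> inversion_cong S a" by (rule subsetD[OF rho2_subset_inversion_cong uw])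
  then have "(b # w, b # v) \<in> inversion_cong S a"
    by (rule is_cong_trans[OF is_cong_inversion_cong is_cong_sym[OF is_cong_inversion_cong] uv])
  then have wv: "(w, v) \<in> inversion_cong S a" by (rule inversion_cong_Cons)
  then have "(w, v) \<in> rho (lists S) (@) 2" by (intro IH inversion_cong_length)
  then have "([b] @ w @ [], [b] @ v @ []) \<in> rho (lists S) (@) 2"
    by (rule is_cong_append_context[OF is_cong_rho_lists]) (use bS in auto)
  then show ?thesis using is_cong_trans[OF is_cong_rho_lists uw] by simp
qed

lemma inversion_cong_subset_rho2:
  assumes S: "S \<subseteq> {a, b}" and "(u, v) \<in> inversion_cong S a"
  shows "(u, v) \<in> rho (lists S) (@) 2"
  using assms(2)
proof (induction "length u" arbitrary: u v rule: less_induct)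
  case less
  have lengths: "length u = length v" by (rule inversion_cong_length[OF less.prems])
  show ?case
  proof (cases u)
    case Nil
    with lengths show ?thesis using is_cong_refl[OF is_cong_rho_lists, of "[]" S 2] by simp
  next
    case (Cons c u')
    with lengths obtain d v' where v: "v = d # v'" by (cases v) auto
    have "length v' = length u'" using lengths Cons v by simp
    have cd: "c \<in> S" "d \<in> S" using less.prems Cons v by (auto simp: inversion_cong_def)
    have IH: "(w, x) \<in> rho (lists S) (@) 2"
      if "length w = length u'" "(w, x) \<in> inversion_cong S a" for w x
      by (rule less.hyps) (use that Cons in auto)
    have "c \<in> {a, b}" "d \<in> {a, b}" using cd S by auto
    then consider "c = d" | "c = a" "d = b" "a \<noteq> b" | "c = b" "d = a" "a \<noteq> b" by auto
    then show ?thesis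
    proof cases
      case 1
      then have "(u', v') \<in> inversion_cong S a"
        using less.prems Cons v by (auto intro: inversion_cong_Cons)
      then have "(u', v') \<in> rho (lists S) (@) 2" by (rule IH[OF refl])
      then have "([c] @ u' @ [], [c] @ v' @ []) \<in> rho (lists S) (@) 2"
        by (rule is_cong_append_context[OF is_cong_rho_lists]) (use cd in auto)
      then show ?thesis using 1 Cons v by simp
    next
      case 2
      have "(a # u', b # v') \<in> rho (lists S) (@) 2"
      proof (rule rho2_of_distinct_heads[OF \<open>a \<noteq> b\<close> S])
        show "(a # u', b # v') \<in> inversion_cong S a" using less.prems Cons v 2 by simp
      qed (use IH \<open>length v' = length u'\<close> in simp)
      then show ?thesis using Cons v 2 by simp
    next
      case 3
      have "(a # v', b # u') \<in> rho (lists S) (@) 2"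
      proof (rule rho2_of_distinct_heads[OF \<open>a \<noteq> b\<close> S])
        show "(a # v', b # u') \<in> inversion_cong S a"
          using is_cong_sym[OF is_cong_inversion_cong less.prems] Cons v 3 by simp
      qed (rule IH)
      then show ?thesis using is_cong_sym[OF is_cong_rho_lists] Cons v 3 by blast
    qed
  qed
qed

lemma rho2_eq_inversion_cong: "S \<subseteq> {a, b} \<Longrightarrow> rho (lists S) (@) 2 = inversion_cong S a"
  by (intro equalityI rho2_subset_inversion_cong subrelI inversion_cong_subset_rho2)

section \<open>rho_2 as a commutator\<close>

lemma Mset_mset_cong_inversions:
  "f \<in> Mset (@) [mset_cong S, \<beta>] \<Longrightarrow>
   (\<forall>q. occs a (f [True, q]) = occs a (f [False, q]) \<and> non_occs a (f [True, q]) = non_occs a (f [False, q])) \<and>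
   inversions a (f [True, True]) + inversions a (f [False, False])
     = inversions a (f [True, False]) + inversions a (f [False, True])"
proof (induction rule: Mset.induct)
  case (gen i u v)
  then show ?case using mset_eq_occs[of u v a] by (auto simp: less_Suc_eq mset_cong_def)
next
  case (prod g h)
  then show ?case by (simp add: algebra_simps)
qed

lemma term_cond_mset_cong_inversion_cong:
  "term_cond (@) [mset_cong S, total_cong (lists S)] (inversion_cong S a)"
  unfolding term_cond_pair_iff
proof (intro ballI impI)
  fix g assume g: "g \<in> Mset (@) [mset_cong S, total_cong (lists S)]"
    and "(g [False, False], g [False, True]) \<in> inversion_cong S a"
  moreover have "g x \<in> lists S" for x
    by (rule Mset_in_carrier[OF g append_closed_lists]) (auto simp: total_cong_def mset_cong_def)
  ultimately show "(g [True, False], g [True, True]) \<in> inversion_cong S a"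
    using Mset_mset_cong_inversions[OF g, of a] unfolding inversion_cong_def by auto
qed

lemma rho2_subset_commutator_mset_cong_total:
  "rho (lists S) (@) 2 \<subseteq> commutator (lists S) (@) [mset_cong S, total_cong (lists S)]"
proof (rule subset_commutatorI)
  fix d assume d: "is_cong (lists S) (@) d" and tc: "term_cond (@) [mset_cong S, total_cong (lists S)] d"
  show "rho (lists S) (@) 2 \<subseteq> d"
  proof (rule rho2_lists_least[OF d])
    fix x y z assume xyz: "x \<in> lists S" "y \<in> lists S" "z \<in> lists S"
    let ?g = "\<lambda>w. (if w ! 1 then y @ x @ z else []) @ (if w ! 0 then x @ y else y @ x) @
                  (if w ! 1 then [] else z @ y @ x)"
    have "?g \<in> Mset (@) [mset_cong S, total_cong (lists S)]"
      by (intro Mset.prod Mset.gen) (use xyz in \<open>auto simp: total_cong_def mset_cong_def\<close>)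
    moreover have "(?g [False, False], ?g [False, True]) \<in> d"
      using is_cong_refl[OF d, of "y @ x @ z @ y @ x"] xyz by simp
    ultimately have "(?g [True, False], ?g [True, True]) \<in> d" by (rule term_cond_pairD[OF tc])
    then show "(x @ y @ z @ y @ x, y @ x @ z @ x @ y) \<in> d" by simp
  qed
qed

text \<open>As multilinear polynomials on the cube {0,1}^3, a cube_affine function has degree at most 1,
  and cube_alt_sum_zero says that the coefficient of the monomial pqr vanishes.\<close>

definition cube_affine :: "(bool list \<Rightarrow> nat) \<Rightarrow> bool" where
  "cube_affine F \<longleftrightarrow> (\<exists>c h1 h2 h3. \<forall>p q r. F [p, q, r] = c + h1 p + h2 q + h3 r)"

definition cube_alt_sum_zero :: "(bool list \<Rightarrow> nat) \<Rightarrow> bool" where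
  "cube_alt_sum_zero F \<longleftrightarrow>
     F [True, True, True] + F [True, False, False] + F [False, True, False] + F [False, False, True]
   = F [True, True, False] + F [True, False, True] + F [False, True, True] + F [False, False, False]"

lemma cube_affine_coordinate: "i < 3 \<Longrightarrow> cube_affine (\<lambda>x. G (x ! i))"
  unfolding cube_affine_def
proof -
  assume "i < 3"
  then consider "i = 0" | "i = 1" | "i = 2" by linarith
  then show "\<exists>c h1 h2 h3. \<forall>p q r. G ([p, q, r] ! i) = c + h1 p + h2 q + h3 r"
    by cases (force intro: exI[of _ 0] exI[of _ G] exI[of _ "\<lambda>_. 0"])+
qed

lemma cube_alt_sum_zero_coordinate: "i < 3 \<Longrightarrow> cube_alt_sum_zero (\<lambda>x. G (x ! i))"
proof -
  assume "i < 3"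
  then consider "i = 0" | "i = 1" | "i = 2" by linarith
  then show ?thesis unfolding cube_alt_sum_zero_def by cases simp_all
qed

lemma cube_affine_add: "cube_affine F \<Longrightarrow> cube_affine G \<Longrightarrow> cube_affine (\<lambda>x. F x + G x)"
proof -
  assume "cube_affine F" "cube_affine G"
  then obtain c h1 h2 h3 d k1 k2 k3 where "\<forall>p q r. F [p, q, r] = c + h1 p + h2 q + h3 r"
    and "\<forall>p q r. G [p, q, r] = d + k1 p + k2 q + k3 r" unfolding cube_affine_def by blast
  then show ?thesis unfolding cube_affine_def
    by (intro exI[of _ "c + d"] exI[of _ "\<lambda>p. h1 p + k1 p"] exI[of _ "\<lambda>p. h2 p + k2 p"]
        exI[of _ "\<lambda>p. h3 p + k3 p"]) simp
qed

lemma cube_alt_sum_zero_add: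
  "cube_alt_sum_zero F \<Longrightarrow> cube_alt_sum_zero G \<Longrightarrow> cube_alt_sum_zero (\<lambda>x. F x + G x)"
  unfolding cube_alt_sum_zero_def by simp

lemma cube_alt_sum_zero_mult: "cube_affine F \<Longrightarrow> cube_affine G \<Longrightarrow> cube_alt_sum_zero (\<lambda>x. F x * G x)"
  unfolding cube_affine_def cube_alt_sum_zero_def by (elim exE) (simp add: algebra_simps)

lemma Mset_cube_invariants:
  "f \<in> Mset (@) [\<alpha>, \<beta>, \<gamma>] \<Longrightarrow>
   cube_affine (\<lambda>x. occs a (f x)) \<and> cube_affine (\<lambda>x. non_occs a (f x)) \<and>
   cube_alt_sum_zero (\<lambda>x. inversions a (f x))"
proof (induction rule: Mset.induct)
  case (gen i u v)
  then have "i < 3" by simp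
  from cube_affine_coordinate[OF this, of "\<lambda>t. occs a (if t then v else u)"]
    cube_affine_coordinate[OF this, of "\<lambda>t. non_occs a (if t then v else u)"]
    cube_alt_sum_zero_coordinate[OF this, of "\<lambda>t. inversions a (if t then v else u)"]
  show ?case by simp
next
  case (prod g h)
  then show ?case
    by (simp add: cube_affine_add cube_alt_sum_zero_add cube_alt_sum_zero_mult)
qed

lemma term_cond_total3_inversion_cong:
  "term_cond (@) [total_cong (lists S), total_cong (lists S), total_cong (lists S)] (inversion_cong S a)"
  unfolding term_cond_triple_iff
proof (intro ballI impI)
  fix g assume g: "g \<in> Mset (@) [total_cong (lists S), total_cong (lists S), total_cong (lists S)]"
    and h: "(g [False, False, False], g [False, False, True]) \<in> inversion_cong S a \<and>
         (g [False, True, False], g [False, True, True]) \<in> inversion_cong S a \<and>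
         (g [True, False, False], g [True, False, True]) \<in> inversion_cong S a"
  have inv: "cube_affine (\<lambda>x. occs a (g x))" "cube_affine (\<lambda>x. non_occs a (g x))"
    "cube_alt_sum_zero (\<lambda>x. inversions a (g x))"
    using Mset_cube_invariants[OF g] by auto
  obtain c h1 h2 h3 where occs: "\<forall>p q r. occs a (g [p, q, r]) = c + h1 p + h2 q + h3 r"
    using inv(1) unfolding cube_affine_def by blast
  obtain d k1 k2 k3 where non_occs: "\<forall>p q r. non_occs a (g [p, q, r]) = d + k1 p + k2 q + k3 r"
    using inv(2) unfolding cube_affine_def by blast
  have "h3 True = h3 False" "k3 True = k3 False"
    using h occs non_occs unfolding inversion_cong_def by auto
  moreover have "inversions a (g [True, True, False]) = inversions a (g [True, True, True])"
    using inv(3) h unfolding cube_alt_sum_zero_def inversion_cong_def by auto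
  moreover have "g x \<in> lists S" for x
    by (rule Mset_in_carrier[OF g append_closed_lists]) (auto simp: total_cong_def)
  ultimately show "(g [True, True, False], g [True, True, True]) \<in> inversion_cong S a"
    using occs non_occs unfolding inversion_cong_def by auto
qed

lemma rho2_subset_commutator_total3:
  "rho (lists S) (@) 2 \<subseteq>
   commutator (lists S) (@) [total_cong (lists S), total_cong (lists S), total_cong (lists S)]"
proof (rule subset_commutatorI)
  fix d assume d: "is_cong (lists S) (@) d"
    and tc: "term_cond (@) [total_cong (lists S), total_cong (lists S), total_cong (lists S)] d"
  show "rho (lists S) (@) 2 \<subseteq> d"
  proof (rule rho2_lists_least[OF d])
    fix x y z assume xyz: "x \<in> lists S" "y \<in> lists S" "z \<in> lists S"
    txt \<open>The middle factor is x y at the corners (1, 1, r) and y x at all others, so the three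
      hypotheses of the term condition are reflexivity instances.\<close>
    let ?g = "\<lambda>w. (if w ! 2 then y @ x @ z else []) @
      ((if w ! 0 then [] else y) @ (if w ! 1 then x else []) @ (if w ! 0 then y else []) @
       (if w ! 1 then [] else x)) @ (if w ! 2 then [] else z @ y @ x)"
    have "?g \<in> Mset (@) [total_cong (lists S), total_cong (lists S), total_cong (lists S)]"
      by (intro Mset.prod Mset.gen) (use xyz in \<open>auto simp: total_cong_def\<close>)
    moreover have "(y @ x @ z @ y @ x, y @ x @ z @ y @ x) \<in> d"
      using is_cong_refl[OF d] xyz by simp
    ultimately have "(?g [True, True, False], ?g [True, True, True]) \<in> d"
      by (intro term_cond_tripleD[OF tc]) simp_all
    then show "(x @ y @ z @ y @ x, y @ x @ z @ x @ y) \<in> d" by simp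
  qed
qed

lemma rho2_eq_commutators_two_letters:
  assumes "S \<subseteq> {a, b}"
  shows "commutator (lists S) (@) [mset_cong S, total_cong (lists S)] = rho (lists S) (@) 2"
    and "commutator (lists S) (@) [total_cong (lists S), total_cong (lists S), total_cong (lists S)]
         = rho (lists S) (@) 2"
    and "cancellative_cong (lists S) (@) (rho (lists S) (@) 2)"
proof -
  note rho2 = rho2_eq_inversion_cong[OF assms]
  show "commutator (lists S) (@) [mset_cong S, total_cong (lists S)] = rho (lists S) (@) 2"
    using commutator_least[OF is_cong_inversion_cong term_cond_mset_cong_inversion_cong, of S a]
      rho2_subset_commutator_mset_cong_total[of S] unfolding rho2 by (rule equalityI)
  show "commutator (lists S) (@) [total_cong (lists S), total_cong (lists S), total_cong (lists S)]
         = rho (lists S) (@) 2"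
    using commutator_least[OF is_cong_inversion_cong term_cond_total3_inversion_cong, of S a]
      rho2_subset_commutator_total3[of S] unfolding rho2 by (rule equalityI)
  show "cancellative_cong (lists S) (@) (rho (lists S) (@) 2)"
    unfolding rho2 by (rule cancellative_inversion_cong)
qed

section \<open>Failure of cancellativity over three letters\<close>

lemma abbccab_no_factor_xyzyx:
  assumes "a \<noteq> b" "a \<noteq> c" "b \<noteq> c" "p @ x @ y @ z @ y @ x @ s = [a, b, b, c, c, a, b]"
  shows "x = [] \<or> y = []"
  using assms
  by (cases x; cases y) (auto simp: append_eq_Cons_conv Cons_eq_append_conv append_eq_append_conv2)

definition nonfactors :: "'a list \<Rightarrow> 'a list set" where
  "nonfactors u = {w. \<nexists>p s. p @ w @ s = u}"

lemma nonfactors_append_left: "w \<in> nonfactors u \<Longrightarrow> p @ w \<in> nonfactors u"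
  unfolding nonfactors_def by (simp, metis append.assoc)

lemma nonfactors_append_right: "w \<in> nonfactors u \<Longrightarrow> w @ s \<in> nonfactors u"
proof -
  have "p @ w @ (s @ s') = u" if "p @ (w @ s) @ s' = u" for p s' using that by simp
  then show "w \<in> nonfactors u \<Longrightarrow> w @ s \<in> nonfactors u" unfolding nonfactors_def by blast
qed

definition rees_cong :: "'a set \<Rightarrow> 'a list \<Rightarrow> 'a list rel" where
  "rees_cong S u = Id_on (lists S) \<union> (lists S \<inter> nonfactors u) \<times> (lists S \<inter> nonfactors u)"

lemma is_cong_rees_cong: "is_cong (lists S) (@) (rees_cong S u)"
  unfolding is_cong_def
proof (intro conjI allI impI)
  show "equiv (lists S) (rees_cong S u)"
    by (auto simp: rees_cong_def equiv_def refl_on_def sym_def trans_def)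
  fix w1 w2 w3 w4 assume 1: "(w1, w2) \<in> rees_cong S u" and 2: "(w3, w4) \<in> rees_cong S u"
  then have lists: "w1 @ w3 \<in> lists S" "w2 @ w4 \<in> lists S" by (auto simp: rees_cong_def)
  consider "w1 = w2" "w3 = w4" | "w1 \<in> nonfactors u" "w2 \<in> nonfactors u"
    | "w3 \<in> nonfactors u" "w4 \<in> nonfactors u"
    using 1 2 unfolding rees_cong_def by blast
  then show "(w1 @ w3, w2 @ w4) \<in> rees_cong S u"
  proof cases
    case 1
    then show ?thesis using lists by (simp add: rees_cong_def Id_on_iff)
  next
    case 2
    then show ?thesis using lists nonfactors_append_right[of w1 u w3] nonfactors_append_right[of w2 u w4] by (simp add: rees_cong_def)
  next
    case 3
    then show ?thesis using lists nonfactors_append_left[of w3 u w1] nonfactors_append_left[of w4 u w2] by (simp add: rees_cong_def)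
  qed
qed

text \<open>Three rho_2-moves lead from abbccab b to bcaabbc b. But the word abbccab has no factor xyzyx
  with x and y nonempty, so the Rees congruence of the ideal of its nonfactors contains rho_2 and
  separates it from bcaabbc.\<close>

lemma rho2_not_cancellative:
  assumes abc: "a \<in> S" "b \<in> S" "c \<in> S" "a \<noteq> b" "a \<noteq> c" "b \<noteq> c"
  shows "\<not> cancellative_cong (lists S) (@) (rho (lists S) (@) 2)"
proof
  let ?R = "rho (lists S) (@) 2"
  let ?u = "[a, b, b, c, c, a, b]" and ?v = "[b, c, a, a, b, b, c]"
  assume canc: "cancellative_cong (lists S) (@) ?R"
  have "([] @ ([a, b, b] @ [c] @ [] @ [c] @ [a, b, b]) @ [], [] @ ([c] @ [a, b, b] @ [] @ [a, b, b] @ [c]) @ []) \<in> ?R"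
    "([c] @ ([a] @ [b] @ [] @ [b] @ [a]) @ [b, b, c], [c] @ ([b] @ [a] @ [] @ [a] @ [b]) @ [b, b, c]) \<in> ?R"
    "([] @ ([c] @ [b] @ [a, a, b, b] @ [b] @ [c]) @ [], [] @ ([b] @ [c] @ [a, a, b, b] @ [c] @ [b]) @ []) \<in> ?R"
    by (rule rho2_lists_step; use abc in simp)+
  then have "(?u @ [b], [c, a, b, b, a, b, b, c]) \<in> ?R" "([c, a, b, b, a, b, b, c], [c, b, a, a, b, b, b, c]) \<in> ?R"
    "([c, b, a, a, b, b, b, c], ?v @ [b]) \<in> ?R"
    by simp_all
  then have "(?u @ [b], ?v @ [b]) \<in> ?R" by (blast intro: is_cong_trans[OF is_cong_rho_lists])
  moreover have "?u \<in> lists S" "?v \<in> lists S" "[b] \<in> lists S" using abc by auto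
  ultimately have uv: "(?u, ?v) \<in> ?R" using canc unfolding cancellative_cong_def by blast
  have "?R \<subseteq> rees_cong S ?u"
  proof (rule rho2_lists_least[OF is_cong_rees_cong])
    fix x y z assume xyz: "x \<in> lists S" "y \<in> lists S" "z \<in> lists S"
    show "(x @ y @ z @ y @ x, y @ x @ z @ x @ y) \<in> rees_cong S ?u"
    proof (cases "x = [] \<or> y = []")
      case True
      then show ?thesis using xyz by (auto simp: rees_cong_def Id_on_iff)
    next
      case False
      then have "x @ y @ z @ y @ x \<in> nonfactors ?u" "y @ x @ z @ x @ y \<in> nonfactors ?u"
        using abbccab_no_factor_xyzyx[OF abc(4-6), of _ x y z] abbccab_no_factor_xyzyx[OF abc(4-6), of _ y x z]
        unfolding nonfactors_def by auto
      then show ?thesis using xyz by (simp add: rees_cong_def)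
    qed
  qed
  moreover have "?u \<notin> nonfactors ?u" unfolding nonfactors_def by (auto intro!: exI[of _ "[]"])
  ultimately show False using uv abc by (auto simp: rees_cong_def Id_on_iff)
qed

lemma finite_card_le_1_iff: "finite A \<and> card A \<le> 1 \<longleftrightarrow> (\<exists>a. A \<subseteq> {a})"
proof
  assume "finite A \<and> card A \<le> 1"
  then have "\<forall>x\<in>A. \<forall>y\<in>A. x = y" using card_le_Suc0_iff_eq by auto
  then show "\<exists>a. A \<subseteq> {a}" by blast
qed (auto simp: subset_singleton_iff)

lemma finite_card_le_2_iff: "finite A \<and> card A \<le> 2 \<longleftrightarrow> (\<exists>a b. A \<subseteq> {a, b})"
proof
  assume "finite A \<and> card A \<le> 2"
  then consider "card A = 0" | "card A = 1" | "card A = 2" by linarith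
  then show "\<exists>a b. A \<subseteq> {a, b}"
    using \<open>finite A \<and> card A \<le> 2\<close> by cases (auto simp: card_1_singleton_iff card_2_iff)
next
  assume "\<exists>a b. A \<subseteq> {a, b}"
  then obtain a b where ab: "A \<subseteq> {a, b}" by blast
  have "card {a, b} \<le> 2" by (simp add: card_insert_if)
  moreover have "card A \<le> card {a, b}" using ab by (rule card_mono[rotated]) simp
  ultimately show "finite A \<and> card A \<le> 2" using ab finite_subset by auto
qed

theorem theorem4p8:
  fixes \<Sigma> :: "'a set"
  defines "S \<equiv> lists \<Sigma>"
  defines "one \<equiv> total_cong S"
  shows "commutator S (@) [one, one] = rho S (@) 1
    \<and> commutator S (@) [one, commutator S (@) [one, one]] = trivial_cong S
    \<and> (finite \<Sigma> \<and> card \<Sigma> \<le> 2 \<longrightarrow>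
           rho S (@) 2 = commutator S (@) [commutator S (@) [one, one], one]
         \<and> rho S (@) 2 = commutator S (@) [one, one, one]
         \<and> cancellative_cong S (@) (rho S (@) 2))
    \<and> (\<not> (finite \<Sigma> \<and> card \<Sigma> \<le> 2) \<longrightarrow> \<not> cancellative_cong S (@) (rho S (@) 2))
    \<and> (right_nilpotent S (@) \<longleftrightarrow> finite \<Sigma> \<and> card \<Sigma> \<le> 1)"
proof -
  have one_one: "commutator S (@) [one, one] = mset_cong \<Sigma>"
    unfolding S_def one_def by (rule commutator_total_total)
  have "rho S (@) 2 = commutator S (@) [commutator S (@) [one, one], one]
      \<and> rho S (@) 2 = commutator S (@) [one, one, one]
      \<and> cancellative_cong S (@) (rho S (@) 2)" if "\<Sigma> \<subseteq> {a, b}" for a b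
    using rho2_eq_commutators_two_letters[OF that] unfolding one_one unfolding S_def one_def by simp
  moreover have "commutator S (@) [one, one] = rho S (@) 1"
    using one_one rho1_eq_mset_cong[of \<Sigma>] unfolding S_def by simp
  moreover have "commutator S (@) [one, commutator S (@) [one, one]] = trivial_cong S"
    unfolding one_one unfolding S_def one_def trivial_cong_def by (rule commutator_total_mset_cong)
  moreover have "\<not> cancellative_cong S (@) (rho S (@) 2)" if no_pair: "\<nexists>a b. \<Sigma> \<subseteq> {a, b}"
  proof -
    obtain a b c where "a \<in> \<Sigma>" "b \<in> \<Sigma>" "c \<in> \<Sigma>" "a \<noteq> b" "a \<noteq> c" "b \<noteq> c"
      using no_pair by blast
    then show ?thesis unfolding S_def by (rule rho2_not_cancellative)
  qed
  moreover have "right_nilpotent S (@) \<longleftrightarrow> (\<exists>a. \<Sigma> \<subseteq> {a})"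
    unfolding S_def by (rule right_nilpotent_lists_iff)
  ultimately show ?thesis unfolding finite_card_le_2_iff finite_card_le_1_iff by blast
qed

end
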